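(* In the setting of the Dynamics on Stars lemma (IPD on $\mathbb{S}_d^n$, $d>15$, a star $G'$ with leaves $3,\dots,d-g_1$ initially $\mathrm{C}$ and leaves $d-g_1+1,\dots,d$ initially $\mathrm{D}$, other vertices arbitrary), take $g_0(d)=2$, $g_1(d)=3$, $g_2(d)=d/3-2$. If $M'=M'(d)$ satisfies $M'(d)/d^2\to\infty$, then for all sufficiently large $d$, $$\mathbb{P}[T_{g_2}\ge T_{g_0}\wedge M']\le \tfrac23.$$
   Context: IPD process: vertices carry actions in $\{\mathrm{C},\mathrm{D}\}$, each edge has an independent rate-1 Poisson clock, and when the clock of $(u,v)$ rings, $(\mathrm{C},\mathrm{C})\to(\mathrm{C},\mathrm{C})$, $(\mathrm{C},\mathrm{D})\to(\mathrm{D},\mathrm{D})$, $(\mathrm{D},\mathrm{C})\to(\mathrm{D},\mathrm{D})$, $(\mathrm{D},\mathrm{D})\to(\mathrm{C},\mathrm{C})$. $\mathbb{S}_d^n$ is a chain of $n$ stars with $d$ leaves each, consecutive stars sharing one leaf edge; in a star $G'$, $0$ is the root, leaves are $1,\dots,d$, and $1,2$ are the external vertices (leaves shared with neighbouring stars, or one arbitrary leaf for an extremal star). $N_{\mathrm{D}}$ is the number of $\mathrm{D}$'s among leaves $3,\dots,d$ of $G'$, and $T_g$ is the first time $N_{\mathrm{D}}=g$. $a\wedge b=\min\{a,b\}$. *)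

theory Defs
  imports "HOL-Probability.Probability"
begin

datatype act = Cp | Df

text \<open>Root j : root of star j (j < n);
  Link j : leaf shared by stars j-1 and j (j <= n); Link j is external leaf 1 of star j
           and Link (j+1) is external leaf 2 of star j (Link 0 and Link n are the
           extra external leaves of the extremal stars);
  Leaf j k : private leaf number k of star j, 3 <= k <= d.\<close>
datatype vtx = Root nat | Link nat | Leaf nat nat

definition star_leaves :: "nat \<Rightarrow> nat \<Rightarrow> vtx set" where
  "star_leaves d j = {Link j, Link (Suc j)} \<union> {Leaf j k | k. 3 \<le> k \<and> k \<le> d}"

definition chain_edges :: "nat \<Rightarrow> nat \<Rightarrow> (vtx \<times> vtx) set" where
  "chain_edges d n = {(Root j, v) | j v. j < n \<and> v \<in> star_leaves d j}"

definition ipd_update :: "(vtx \<Rightarrow> act) \<Rightarrow> vtx \<times> vtx \<Rightarrow> (vtx \<Rightarrow> act)" where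
  "ipd_update x e = (let a = (if x (fst e) = x (snd e) then Cp else Df)
                     in x(fst e := a, snd e := a))"

text \<open>Continuous-time IPD process with independent rate-1 Poisson clocks on the edges,
  realised through its jump chain: the sample space is an i.i.d. sequence of pairs
  (edge that rings, holding time), the edge being uniform on the edge set and the
  holding time exponential with rate |E|.\<close>
definition ipd_space :: "nat \<Rightarrow> nat \<Rightarrow> ((vtx \<times> vtx) \<times> real) stream measure" where
  "ipd_space d n = stream_space
     (measure_pmf (pmf_of_set (chain_edges d n)) \<Otimes>\<^sub>M
      density lborel (exponential_density (real (card (chain_edges d n)))))"

definition jump_time :: "((vtx \<times> vtx) \<times> real) stream \<Rightarrow> nat \<Rightarrow> real" where
  "jump_time \<omega> k = (\<Sum>i<k. snd (\<omega> !! i))"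

text \<open>Configuration right after the k-th ring (constant on [jump_time k, jump_time (k+1))).\<close>
primrec conf :: "(vtx \<Rightarrow> act) \<Rightarrow> ((vtx \<times> vtx) \<times> real) stream \<Rightarrow> nat \<Rightarrow> (vtx \<Rightarrow> act)" where
  "conf x0 \<omega> 0 = x0"
| "conf x0 \<omega> (Suc k) = ipd_update (conf x0 \<omega> k) (fst (\<omega> !! k))"

definition N_D :: "nat \<Rightarrow> nat \<Rightarrow> (vtx \<Rightarrow> act) \<Rightarrow> nat" where
  "N_D d j x = card {k. 3 \<le> k \<and> k \<le> d \<and> x (Leaf j k) = Df}"

text \<open>T_g: first time N_D = g (infinity if never).\<close>
definition hit_time :: "nat \<Rightarrow> nat \<Rightarrow> (vtx \<Rightarrow> act) \<Rightarrow> nat \<Rightarrow> ((vtx \<times> vtx) \<times> real) stream \<Rightarrow> ereal" where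
  "hit_time d j x0 g \<omega> = (INF k \<in> {k. N_D d j (conf x0 \<omega> k) = g}. ereal (jump_time \<omega> k))"

end

theory Submission
  imports Defs
begin

(* Write m for N_D.  While the root is D, m moves
   up along the d - 2 - m private edges to C-leaves and down along the m edges to D-leaves, so
   h(m) = 1 - 4/2^m is subharmonic for the generator as long as 3m + 2 <= d; and the potential
   U = G - m + [root is C]/3 has drift at most -1 as long as 3 <= m and 7m + 11 <= 3d.  By
   backward induction on the number k of remaining steps, max(0, h(m) - |E| U/(k+1)) is a lower
   bound for the probability that m reaches G = g_2 within k steps without first reaching 2.
   From m = 3, where h = 1/2, and for k = 4|E|d this gives at least 5/12.  The first k holding
   times have total mean 4d, so by Markov's inequality they exceed M' with probability at most
   4d/M' <= 1/12 once M' >= 48d, which holds eventually because M'/d^2 tends to infinity.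
   Together the bad event has probability at most 7/12 + 1/12 = 2/3. *)

instance vtx :: countable by countable_datatype

lemma max_0_diff_le:
  fixes h W S k :: real
  assumes "h \<le> 1" "0 < k" "h - (W - 1) / k \<le> S" "0 \<le> S"
  shows "max 0 (h - W / (k + 1)) \<le> S"
proof (cases "h - W / (k + 1) \<le> 0")
  case False
  have "h * (k + 1) \<le> k + 1"
    using mult_right_mono[OF assms(1), of "k + 1"] assms(2) by simp
  then have "W < k + 1"
    using False assms(2) by (simp add: field_simps)
  then have "(W - 1) / k \<le> W / (k + 1)"
    using assms(2) by (simp add: field_simps)
  then show ?thesis
    using assms(3,4) by simp
qed (use assms(4) in simp)

lemma (in prob_space) nn_integral_snth_stream_space:
  assumes [measurable]: "f \<in> borel_measurable M"
  shows "(\<integral>\<^sup>+\<omega>. f (\<omega> !! i) \<partial>stream_space M) = (\<integral>\<^sup>+t. f t \<partial>M)"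
proof (induction i)
  case 0
  have "(\<integral>\<^sup>+\<omega>. f (\<omega> !! 0) \<partial>stream_space M) = (\<integral>\<^sup>+t. (\<integral>\<^sup>+X. f ((t ## X) !! 0) \<partial>stream_space M) \<partial>M)"
    by (rule nn_integral_stream_space) measurable
  then show ?case
    using prob_space.emeasure_space_1[OF prob_space_stream_space] by simp
next
  case (Suc i)
  have "(\<integral>\<^sup>+\<omega>. f (\<omega> !! Suc i) \<partial>stream_space M) =
      (\<integral>\<^sup>+t. (\<integral>\<^sup>+X. f ((t ## X) !! Suc i) \<partial>stream_space M) \<partial>M)"
    by (rule nn_integral_stream_space) measurable
  then show ?case
    using Suc emeasure_space_1 by simp
qed

section \<open>Dynamics of the private leaves of one star\<close>

definition D_leaves :: "nat \<Rightarrow> nat \<Rightarrow> (vtx \<Rightarrow> act) \<Rightarrow> nat set" where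
  "D_leaves d j x = {k. 3 \<le> k \<and> k \<le> d \<and> x (Leaf j k) = Df}"

definition private_edges :: "nat \<Rightarrow> nat \<Rightarrow> (vtx \<times> vtx) set" where
  "private_edges d j = (\<lambda>k. (Root j, Leaf j k)) ` {3..d}"

definition link_edges :: "nat \<Rightarrow> (vtx \<times> vtx) set" where
  "link_edges j = {(Root j, Link j), (Root j, Link (Suc j))}"

lemma N_D_eq_card_D_leaves: "N_D d j x = card (D_leaves d j x)"
  by (simp add: N_D_def D_leaves_def)

lemma D_leaves_subset: "D_leaves d j x \<subseteq> {3..d}"
  by (auto simp: D_leaves_def)

lemma finite_D_leaves: "finite (D_leaves d j x)"
  by (rule finite_subset[OF D_leaves_subset]) simp

lemma private_edges_subset: "j < n \<Longrightarrow> private_edges d j \<subseteq> chain_edges d n"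
  by (auto simp: private_edges_def chain_edges_def star_leaves_def)

lemma link_edges_subset: "j < n \<Longrightarrow> link_edges j \<subseteq> chain_edges d n"
  by (auto simp: link_edges_def chain_edges_def star_leaves_def)

lemma finite_chain_edges: "finite (chain_edges d n)"
proof -
  have "star_leaves d j = {Link j, Link (Suc j)} \<union> Leaf j ` {3..d}" for j
    by (auto simp: star_leaves_def)
  then have "finite (star_leaves d j)" for j
    by simp
  moreover have "chain_edges d n = (\<Union>j<n. Pair (Root j) ` star_leaves d j)"
    by (auto simp: chain_edges_def)
  ultimately show ?thesis
    by simp
qed

lemma card_chain_edges_pos: "0 < n \<Longrightarrow> 0 < card (chain_edges d n)"
  using link_edges_subset[of 0 n d] finite_chain_edges
  by (auto simp: card_gt_0_iff link_edges_def)

lemma chain_edgesE: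
  assumes "e \<in> chain_edges d n"
  obtains i v where "e = (Root i, v)" "i < n" "v \<in> star_leaves d i"
  using assms by (auto simp: chain_edges_def)

lemma ipd_update_Leaf_nonprivate:
  assumes "e \<in> chain_edges d n" "e \<notin> private_edges d j"
  shows "ipd_update x e (Leaf j k) = x (Leaf j k)"
proof -
  obtain i v where e: "e = (Root i, v)" "v \<in> star_leaves d i"
    using assms(1) by (rule chain_edgesE)
  have "v \<noteq> Leaf j k"
    using e assms(2) by (auto simp: star_leaves_def private_edges_def)
  then show ?thesis
    by (simp add: e ipd_update_def Let_def)
qed

lemma ipd_update_Root_nonincident:
  assumes "e \<in> chain_edges d n" "e \<notin> private_edges d j" "e \<notin> link_edges j"
  shows "ipd_update x e (Root j) = x (Root j)"
proof -
  obtain i v where e: "e = (Root i, v)" "v \<in> star_leaves d i"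
    using assms(1) by (rule chain_edgesE)
  have "i \<noteq> j"
    using e assms(2,3) by (auto simp: star_leaves_def private_edges_def link_edges_def)
  moreover have "v \<noteq> Root j"
    using e(2) by (auto simp: star_leaves_def)
  ultimately show ?thesis
    by (simp add: e ipd_update_def Let_def)
qed

lemma N_D_update_nonprivate:
  "e \<in> chain_edges d n \<Longrightarrow> e \<notin> private_edges d j \<Longrightarrow> N_D d j (ipd_update x e) = N_D d j x"
  by (simp add: N_D_def ipd_update_Leaf_nonprivate)

lemma ipd_update_Root_private:
  assumes "k \<in> {3..d}"
  shows "ipd_update x (Root j, Leaf j k) (Root j) =
    (if k \<in> D_leaves d j x then (if x (Root j) = Cp then Df else Cp) else x (Root j))"
  using assms by (cases "x (Root j)"; cases "x (Leaf j k)") (simp_all add: ipd_update_def D_leaves_def)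

lemma D_leaves_update_private:
  assumes "k \<in> {3..d}"
  shows "D_leaves d j (ipd_update x (Root j, Leaf j k)) =
      (if x (Root j) = x (Leaf j k) then D_leaves d j x - {k} else insert k (D_leaves d j x))"
  using assms by (auto simp: D_leaves_def ipd_update_def)

lemma N_D_update_private:
  assumes "k \<in> {3..d}"
  shows "N_D d j (ipd_update x (Root j, Leaf j k)) =
    (if x (Root j) = Cp then N_D d j x
     else if k \<in> D_leaves d j x then N_D d j x - 1 else Suc (N_D d j x))"
  using assms finite_D_leaves[of d j x]
  by (cases "x (Root j)"; cases "x (Leaf j k)")
     (simp_all add: D_leaves_update_private N_D_eq_card_D_leaves, simp_all add: D_leaves_def insert_absorb)

(* Every edge rings at rate 1, so this is the generator of the IPD process. *)
definition ipd_generator :: "nat \<Rightarrow> nat \<Rightarrow> ((vtx \<Rightarrow> act) \<Rightarrow> real) \<Rightarrow> (vtx \<Rightarrow> act) \<Rightarrow> real" where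
  "ipd_generator d n f x = (\<Sum>e\<in>chain_edges d n. f (ipd_update x e) - f x)"

lemma ipd_generator_split:
  assumes "j < n"
  shows "ipd_generator d n f x =
    (\<Sum>k\<in>{3..d}. f (ipd_update x (Root j, Leaf j k)) - f x) +
    (\<Sum>e\<in>chain_edges d n - private_edges d j. f (ipd_update x e) - f x)"
proof -
  have "(\<Sum>e\<in>private_edges d j. f (ipd_update x e) - f x) =
      (\<Sum>k\<in>{3..d}. f (ipd_update x (Root j, Leaf j k)) - f x)"
    unfolding private_edges_def by (subst sum.reindex) (auto simp: inj_on_def)
  moreover have "ipd_generator d n f x =
      (\<Sum>e\<in>chain_edges d n - private_edges d j. f (ipd_update x e) - f x) +
      (\<Sum>e\<in>private_edges d j. f (ipd_update x e) - f x)"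
    unfolding ipd_generator_def
    by (rule sum.subset_diff[OF private_edges_subset[OF assms] finite_chain_edges])
  ultimately show ?thesis
    by simp
qed

lemma sum_D_leaves_If:
  fixes \<alpha> \<beta> :: real
  shows "(\<Sum>k\<in>{3..d}. if k \<in> D_leaves d j x then \<alpha> else \<beta>) =
    real (N_D d j x) * \<alpha> + (real (d - 2) - real (N_D d j x)) * \<beta>"
proof -
  have "card ({3..d} - D_leaves d j x) = card {3..d} - card (D_leaves d j x)"
    by (simp add: card_Diff_subset finite_D_leaves D_leaves_subset)
  moreover have "card (D_leaves d j x) \<le> d - 2"
    using card_mono[OF _ D_leaves_subset, of d j x] by simp
  ultimately have "real (card ({3..d} - D_leaves d j x)) = real (d - 2) - real (N_D d j x)"
    by (simp add: N_D_eq_card_D_leaves of_nat_diff)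
  moreover have "{3..d} \<inter> {k. k \<in> D_leaves d j x} = D_leaves d j x"
    using D_leaves_subset by blast
  ultimately show ?thesis
    by (simp add: sum.If_cases Diff_eq N_D_eq_card_D_leaves)
qed

section \<open>Two potentials for the count of D-leaves\<close>

definition subharm :: "nat \<Rightarrow> real" where
  "subharm m = 1 - 4 / 2 ^ m"

lemma subharm_le_1: "subharm m \<le> 1"
  by (simp add: subharm_def)

lemma subharm_nonpos: "m \<le> 2 \<Longrightarrow> subharm m \<le> 0"
  by (auto simp: subharm_def le_Suc_eq numeral_2_eq_2)

lemma subharm_3: "subharm 3 = 1/2"
  by (simp add: subharm_def)

lemma generator_subharm_nonneg:
  assumes "j < n" "3 * N_D d j x + 2 \<le> d"
  shows "0 \<le> ipd_generator d n (\<lambda>y. subharm (N_D d j y)) x"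
proof -
  define m where "m = N_D d j x"
  have "(\<Sum>e\<in>chain_edges d n - private_edges d j. subharm (N_D d j (ipd_update x e)) - subharm m) = 0"
    by (rule sum.neutral) (auto simp: N_D_update_nonprivate m_def)
  moreover have "0 \<le> (\<Sum>k\<in>{3..d}. subharm (N_D d j (ipd_update x (Root j, Leaf j k))) - subharm m)"
  proof (cases "x (Root j)")
    case Cp
    then show ?thesis by (simp add: N_D_update_private m_def)
  next
    case Df
    have "(\<Sum>k\<in>{3..d}. subharm (N_D d j (ipd_update x (Root j, Leaf j k))) - subharm m) =
        (\<Sum>k\<in>{3..d}. if k \<in> D_leaves d j x then subharm (m - 1) - subharm m
                                         else subharm (Suc m) - subharm m)"
      using Df by (intro sum.cong) (auto simp: N_D_update_private m_def)
    also have "\<dots> = real m * (subharm (m - 1) - subharm m) +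
        (real (d - 2) - real m) * (subharm (Suc m) - subharm m)"
      by (simp add: sum_D_leaves_If m_def)
    also have "real m * (subharm (m - 1) - subharm m) = - 4 * real m / 2 ^ m"
      by (cases m) (simp_all add: subharm_def field_simps)
    also have "subharm (Suc m) - subharm m = 2 / 2 ^ m"
      by (simp add: subharm_def field_simps)
    also have "- 4 * real m / 2 ^ m + (real (d - 2) - real m) * (2 / 2 ^ m) =
        (2 * (real (d - 2) - 3 * real m)) / 2 ^ m"
      by (simp add: field_simps)
    finally show ?thesis
      using assms(2) by (simp add: m_def of_nat_diff)
  qed
  ultimately show ?thesis
    using ipd_generator_split[OF assms(1), of d "\<lambda>y. subharm (N_D d j y)" x] by (simp add: m_def)
qed

(* Without the bonus the drift would vanish while the root is C, since then N_D cannot move. *)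
definition root_bonus :: "nat \<Rightarrow> (vtx \<Rightarrow> act) \<Rightarrow> real" where
  "root_bonus j x = (if x (Root j) = Cp then 1/3 else 0)"

definition gap_pot :: "nat \<Rightarrow> nat \<Rightarrow> nat \<Rightarrow> (vtx \<Rightarrow> act) \<Rightarrow> real" where
  "gap_pot d j G x = real G - real (N_D d j x) + root_bonus j x"

lemma gap_pot_ge: "N_D d j x \<le> G \<Longrightarrow> real G - real (N_D d j x) \<le> gap_pot d j G x"
  by (simp add: gap_pot_def root_bonus_def)

lemma sum_gap_pot_nonprivate_le:
  assumes "j < n"
  shows "(\<Sum>e\<in>chain_edges d n - private_edges d j. gap_pot d j G (ipd_update x e) - gap_pot d j G x)
    \<le> 2 * (1/3 - root_bonus j x)"
proof -
  let ?R = "chain_edges d n - private_edges d j"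
  have "(\<Sum>e\<in>?R. gap_pot d j G (ipd_update x e) - gap_pot d j G x)
      \<le> (\<Sum>e\<in>?R. if e \<in> link_edges j then 1/3 - root_bonus j x else 0)"
  proof (rule sum_mono)
    fix e assume e: "e \<in> ?R"
    then have "gap_pot d j G (ipd_update x e) - gap_pot d j G x = root_bonus j (ipd_update x e) - root_bonus j x"
      using N_D_update_nonprivate[of e d n j x] by (simp add: gap_pot_def)
    moreover have "e \<notin> link_edges j \<Longrightarrow> root_bonus j (ipd_update x e) = root_bonus j x"
      using e ipd_update_Root_nonincident[of e d n j x] by (simp add: root_bonus_def)
    moreover have "root_bonus j (ipd_update x e) \<le> 1/3"
      by (simp add: root_bonus_def)
    ultimately show "gap_pot d j G (ipd_update x e) - gap_pot d j G x
        \<le> (if e \<in> link_edges j then 1/3 - root_bonus j x else 0)"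
      by auto
  qed
  also have "\<dots> = real (card (?R \<inter> link_edges j)) * (1/3 - root_bonus j x)"
    using finite_chain_edges by (simp add: sum.If_cases)
  also have "\<dots> \<le> 2 * (1/3 - root_bonus j x)"
  proof (rule mult_right_mono)
    have "card (?R \<inter> link_edges j) \<le> card (link_edges j)"
      by (rule card_mono) (auto simp: link_edges_def)
    also have "\<dots> \<le> 2"
      by (simp add: link_edges_def card_insert_le_m1)
    finally show "real (card (?R \<inter> link_edges j)) \<le> 2"
      by simp
  qed (simp add: root_bonus_def)
  finally show ?thesis .
qed

lemma sum_gap_pot_private_le:
  assumes "3 \<le> N_D d j x" "7 * N_D d j x + 11 \<le> 3 * d"
  shows "(\<Sum>k\<in>{3..d}. gap_pot d j G (ipd_update x (Root j, Leaf j k)) - gap_pot d j G x)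
    \<le> - 1 - 2 * (1/3 - root_bonus j x)"
proof (cases "x (Root j)")
  case Cp
  have "(\<Sum>k\<in>{3..d}. gap_pot d j G (ipd_update x (Root j, Leaf j k)) - gap_pot d j G x)
      = (\<Sum>k\<in>{3..d}. if k \<in> D_leaves d j x then - 1/3 else 0)"
  proof (rule sum.cong)
    fix k assume k: "k \<in> {3..d}"
    show "gap_pot d j G (ipd_update x (Root j, Leaf j k)) - gap_pot d j G x
        = (if k \<in> D_leaves d j x then - 1/3 else 0)"
      using Cp by (simp add: gap_pot_def root_bonus_def N_D_update_private[OF k] ipd_update_Root_private[OF k])
  qed simp
  also have "\<dots> = - real (N_D d j x) / 3"
    by (simp add: sum_D_leaves_If)
  finally show ?thesis
    using assms(1) Cp by (simp add: root_bonus_def)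
next
  case Df
  have "(\<Sum>k\<in>{3..d}. gap_pot d j G (ipd_update x (Root j, Leaf j k)) - gap_pot d j G x)
      = (\<Sum>k\<in>{3..d}. if k \<in> D_leaves d j x then 4/3 else -1)"
  proof (rule sum.cong)
    fix k assume k: "k \<in> {3..d}"
    have "k \<in> D_leaves d j x \<Longrightarrow> 1 \<le> N_D d j x"
      using finite_D_leaves[of d j x] by (auto simp: N_D_eq_card_D_leaves Suc_le_eq card_gt_0_iff)
    then show "gap_pot d j G (ipd_update x (Root j, Leaf j k)) - gap_pot d j G x
        = (if k \<in> D_leaves d j x then 4/3 else -1)"
      using Df by (simp add: gap_pot_def root_bonus_def N_D_update_private[OF k] ipd_update_Root_private[OF k] of_nat_diff)
  qed simp
  also have "\<dots> = real (N_D d j x) * (4/3) - (real (d - 2) - real (N_D d j x))"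
    by (simp add: sum_D_leaves_If)
  finally show ?thesis
    using assms Df by (simp add: root_bonus_def of_nat_diff)
qed

lemma generator_gap_pot_le:
  assumes "j < n" "3 \<le> N_D d j x" "7 * N_D d j x + 11 \<le> 3 * d"
  shows "ipd_generator d n (gap_pot d j G) x \<le> -1"
  using ipd_generator_split[OF assms(1), of d "gap_pot d j G" x]
    sum_gap_pot_private_le[OF assms(2,3), of G] sum_gap_pot_nonprivate_le[OF assms(1), of d G x]
  by simp

definition success_bound :: "nat \<Rightarrow> nat \<Rightarrow> nat \<Rightarrow> nat \<Rightarrow> nat \<Rightarrow> (vtx \<Rightarrow> act) \<Rightarrow> real" where
  "success_bound d n j G k x =
    max 0 (subharm (N_D d j x) - real (card (chain_edges d n)) * gap_pot d j G x / real (Suc k))"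

lemma success_bound_nonneg: "0 \<le> success_bound d n j G k x"
  by (simp add: success_bound_def)

lemma success_bound_le_1:
  assumes "N_D d j x \<le> G"
  shows "success_bound d n j G k x \<le> 1"
proof -
  have "0 \<le> real (card (chain_edges d n)) * gap_pot d j G x / real (Suc k)"
    using gap_pot_ge[OF assms] assms by simp
  then show ?thesis
    using subharm_le_1[of "N_D d j x"] by (simp add: success_bound_def)
qed

lemma success_bound_eq_0:
  assumes "N_D d j x \<le> 2" "N_D d j x \<le> G"
  shows "success_bound d n j G k x = 0"
proof -
  have "0 \<le> real (card (chain_edges d n)) * gap_pot d j G x / real (Suc k)"
    using gap_pot_ge[OF assms(2)] assms(2) by simp
  then show ?thesis
    using subharm_nonpos[OF assms(1)] by (simp add: success_bound_def)
qed

lemma success_bound_0_eq_0: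
  assumes "0 < n" "N_D d j x < G"
  shows "success_bound d n j G 0 x = 0"
proof -
  have "1 \<le> card (chain_edges d n)"
    using card_chain_edges_pos[OF assms(1), of d] by linarith
  moreover have "1 \<le> gap_pot d j G x"
    using gap_pot_ge[of d j x G] assms(2) by linarith
  ultimately have "1 \<le> real (card (chain_edges d n)) * gap_pot d j G x"
    using mult_mono[of 1 "real (card (chain_edges d n))" 1 "gap_pot d j G x"] by simp
  then show ?thesis
    using subharm_le_1[of "N_D d j x"] by (simp add: success_bound_def)
qed

lemma success_bound_Suc_le:
  assumes "j < n" "3 \<le> N_D d j x" "N_D d j x < G" "3 * G + 3 \<le> d"
  shows "success_bound d n j G (Suc k) x
    \<le> (\<Sum>e\<in>chain_edges d n. success_bound d n j G k (ipd_update x e)) / card (chain_edges d n)"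
proof -
  let ?E = "chain_edges d n" and ?c = "real (card (chain_edges d n))"
  let ?h = "\<lambda>y. subharm (N_D d j y)" and ?U = "gap_pot d j G"
  have c: "0 < ?c"
    using card_chain_edges_pos[of n d] assms(1) by simp
  have h: "?c * ?h x \<le> (\<Sum>e\<in>?E. ?h (ipd_update x e))"
    using generator_subharm_nonneg[OF assms(1), of d x] assms(3,4)
    by (simp add: ipd_generator_def sum_subtractf)
  have U: "(\<Sum>e\<in>?E. ?U (ipd_update x e)) \<le> ?c * ?U x - 1"
    using generator_gap_pot_le[OF assms(1,2), of G] assms(3,4)
    by (simp add: ipd_generator_def sum_subtractf)
  have "?c * (\<Sum>e\<in>?E. ?U (ipd_update x e)) / real (Suc k) \<le> ?c * (?c * ?U x - 1) / real (Suc k)"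
    using U c by (intro divide_right_mono mult_left_mono) simp_all
  then have "?c * ?h x - ?c * (?c * ?U x - 1) / real (Suc k)
      \<le> (\<Sum>e\<in>?E. ?h (ipd_update x e)) - ?c * (\<Sum>e\<in>?E. ?U (ipd_update x e)) / real (Suc k)"
    using h by linarith
  also have "\<dots> = (\<Sum>e\<in>?E. ?h (ipd_update x e) - ?c * ?U (ipd_update x e) / real (Suc k))"
    by (simp add: sum_subtractf sum_divide_distrib sum_distrib_left)
  also have "\<dots> \<le> (\<Sum>e\<in>?E. success_bound d n j G k (ipd_update x e))"
    by (rule sum_mono) (simp add: success_bound_def)
  finally have bound: "?h x - (?c * ?U x - 1) / real (Suc k)
      \<le> (\<Sum>e\<in>?E. success_bound d n j G k (ipd_update x e)) / ?c"
    using c by (simp add: field_simps)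
  have Suc_Suc: "real (Suc (Suc k)) = real (Suc k) + 1"
    by simp
  show ?thesis
    unfolding success_bound_def[of d n j G "Suc k"] Suc_Suc
    by (intro max_0_diff_le[OF subharm_le_1 _ bound]) (simp_all add: sum_nonneg success_bound_nonneg)
qed

lemma N_D_update_le_Suc:
  assumes "e \<in> chain_edges d n"
  shows "N_D d j (ipd_update x e) \<le> Suc (N_D d j x)"
proof (cases "e \<in> private_edges d j")
  case True
  then obtain k where k: "k \<in> {3..d}" and e: "e = (Root j, Leaf j k)"
    by (auto simp: private_edges_def)
  then show ?thesis
    using N_D_update_private[OF k, of j x] by auto
qed (simp add: N_D_update_nonprivate[OF assms])

section \<open>The jump chain\<close>

definition step_measure :: "nat \<Rightarrow> nat \<Rightarrow> ((vtx \<times> vtx) \<times> real) measure" where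
  "step_measure d n = measure_pmf (pmf_of_set (chain_edges d n)) \<Otimes>\<^sub>M
     density lborel (exponential_density (real (card (chain_edges d n))))"

lemma ipd_space_eq_stream_space: "ipd_space d n = stream_space (step_measure d n)"
  by (simp add: ipd_space_def step_measure_def)

lemma prob_space_holding_time:
  "0 < n \<Longrightarrow> prob_space (density lborel (exponential_density (real (card (chain_edges d n)))))"
  using card_chain_edges_pos by (intro prob_space_exponential_density) auto

lemma prob_space_step_measure: "0 < n \<Longrightarrow> prob_space (step_measure d n)"
  unfolding step_measure_def
  by (intro prob_space_pair prob_space_measure_pmf prob_space_holding_time)

lemma space_step_measure [simp]: "space (step_measure d n) = UNIV"
  by (simp add: step_measure_def space_pair_measure)

lemma space_stream_step_measure [simp]: "space (stream_space (step_measure d n)) = UNIV"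
  by (simp add: space_stream_space)

lemma measurable_fst_step_measure [measurable]:
  "fst \<in> measurable (step_measure d n) (count_space UNIV)"
  unfolding step_measure_def by (rule measurable_compose[OF measurable_fst]) simp

lemma measurable_snd_step_measure [measurable]: "snd \<in> borel_measurable (step_measure d n)"
  unfolding step_measure_def by measurable

fun reaches_before_two ::
  "nat \<Rightarrow> nat \<Rightarrow> nat \<Rightarrow> nat \<Rightarrow> (vtx \<Rightarrow> act) \<Rightarrow> ((vtx \<times> vtx) \<times> real) stream \<Rightarrow> bool" where
  "reaches_before_two d j G 0 x \<omega> \<longleftrightarrow> N_D d j x = G"
| "reaches_before_two d j G (Suc k) x \<omega> \<longleftrightarrow> N_D d j x = G \<or>
     (N_D d j x \<noteq> 2 \<and> reaches_before_two d j G k (ipd_update x (fst (shd \<omega>))) (stl \<omega>))"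

lemma measurable_reaches_before_two:
  "Measurable.pred (stream_space (step_measure d n)) (reaches_before_two d j G k x)"
proof (induction k arbitrary: x)
  case 0
  have "reaches_before_two d j G 0 x = (\<lambda>_. N_D d j x = G)"
    by auto
  then show ?case
    by simp
next
  case (Suc k)
  have "(\<lambda>\<omega>. (\<lambda>e \<omega>. reaches_before_two d j G k (ipd_update x e) (stl \<omega>)) (fst (shd \<omega>)) \<omega>)
      \<in> measurable (stream_space (step_measure d n)) (count_space UNIV)"
    by (rule measurable_compose_countable'[OF _ measurable_compose[OF measurable_shd measurable_fst_step_measure]])
      (simp_all add: measurable_compose[OF measurable_stl Suc.IH])
  then have [measurable]: "Measurable.pred (stream_space (step_measure d n))
      (\<lambda>\<omega>. reaches_before_two d j G k (ipd_update x (fst (shd \<omega>))) (stl \<omega>))"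
    by simp
  show ?case
    by simp
qed

lemma sets_reaches_before_two:
  "{\<omega>. reaches_before_two d j G k x \<omega>} \<in> sets (stream_space (step_measure d n))"
  using predE[OF measurable_reaches_before_two] by simp

lemma emeasure_reaches_before_two_Suc:
  assumes "0 < n" "N_D d j x \<noteq> G" "N_D d j x \<noteq> 2"
  shows "emeasure (stream_space (step_measure d n)) {\<omega>. reaches_before_two d j G (Suc k) x \<omega>} =
    (\<Sum>e\<in>chain_edges d n. emeasure (stream_space (step_measure d n))
        {\<omega>. reaches_before_two d j G k (ipd_update x e) \<omega>}) / card (chain_edges d n)"
proof -
  interpret prob_space "step_measure d n"
    using assms(1) by (rule prob_space_step_measure)
  interpret H: prob_space "density lborel (exponential_density (real (card (chain_edges d n))))"
    using assms(1) by (rule prob_space_holding_time)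
  let ?S = "stream_space (step_measure d n)"
  define p where "p e = emeasure ?S {\<omega>. reaches_before_two d j G k (ipd_update x e) \<omega>}" for e
  have "emeasure ?S {\<omega>. reaches_before_two d j G (Suc k) x \<omega>} = (\<integral>\<^sup>+t. p (fst t) \<partial>step_measure d n)"
    using emeasure_stream_space[OF sets_reaches_before_two[of d j G "Suc k" x n]] assms(2,3)
    by (simp add: p_def)
  also have "\<dots> = (\<integral>\<^sup>+e. p e \<partial>measure_pmf (pmf_of_set (chain_edges d n)))"
    unfolding step_measure_def by (subst H.nn_integral_fst[symmetric]) (use H.emeasure_space_1 in simp_all)
  also have "\<dots> = (\<Sum>e\<in>chain_edges d n. p e) / card (chain_edges d n)"
    using card_chain_edges_pos[OF assms(1), of d]
    by (intro nn_integral_pmf_of_set finite_chain_edges) auto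
  finally show ?thesis
    by (simp add: p_def)
qed

lemma success_bound_le_emeasure_stopped:
  assumes "0 < n" "N_D d j x = G \<or> N_D d j x \<le> 2" "N_D d j x \<le> G"
  shows "ennreal (success_bound d n j G k x) \<le>
    emeasure (stream_space (step_measure d n)) {\<omega>. reaches_before_two d j G k x \<omega>}"
proof (cases "N_D d j x = G")
  case True
  interpret S: prob_space "stream_space (step_measure d n)"
    using prob_space_step_measure[OF assms(1)] by (rule prob_space.prob_space_stream_space)
  have "{\<omega>. reaches_before_two d j G k x \<omega>} = UNIV"
    using True by (cases k) auto
  then show ?thesis
    using success_bound_le_1[OF assms(3)] S.emeasure_space_1 by simp
qed (use assms success_bound_eq_0 in simp)

lemma success_bound_le_emeasure:
  assumes "j < n" "3 * G + 3 \<le> d" "N_D d j x \<le> G"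
  shows "ennreal (success_bound d n j G k x) \<le>
    emeasure (stream_space (step_measure d n)) {\<omega>. reaches_before_two d j G k x \<omega>}"
  using assms(3)
proof (induction k arbitrary: x)
  case 0
  have n: "0 < n"
    using assms(1) by simp
  show ?case
  proof (cases "N_D d j x = G \<or> N_D d j x \<le> 2")
    case True
    then show ?thesis
      using 0 by (rule success_bound_le_emeasure_stopped[OF n])
  next
    case False
    then show ?thesis
      using success_bound_0_eq_0[OF n, of d j x G] 0 by simp
  qed
next
  case (Suc k)
  let ?S = "stream_space (step_measure d n)" and ?c = "card (chain_edges d n)"
  have n: "0 < n"
    using assms(1) by simp
  show ?case
  proof (cases "N_D d j x = G \<or> N_D d j x \<le> 2")
    case True
    then show ?thesis
      using Suc.prems by (rule success_bound_le_emeasure_stopped[OF n])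
  next
    case False
    then have N: "3 \<le> N_D d j x" "N_D d j x < G"
      using Suc.prems by auto
    have "ennreal (success_bound d n j G (Suc k) x)
        \<le> ennreal ((\<Sum>e\<in>chain_edges d n. success_bound d n j G k (ipd_update x e)) / ?c)"
      using success_bound_Suc_le[OF assms(1) N assms(2)] by (rule ennreal_leI)
    also have "\<dots> = (\<Sum>e\<in>chain_edges d n. ennreal (success_bound d n j G k (ipd_update x e))) / ?c"
      using card_chain_edges_pos[OF n, of d]
      by (simp add: divide_ennreal sum_nonneg success_bound_nonneg sum_ennreal
          ennreal_of_nat_eq_real_of_nat)
    also have "\<dots> \<le> (\<Sum>e\<in>chain_edges d n.
        emeasure ?S {\<omega>. reaches_before_two d j G k (ipd_update x e) \<omega>}) / ?c"
    proof (intro divide_right_mono_ennreal sum_mono Suc.IH)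
      fix e assume "e \<in> chain_edges d n"
      then show "N_D d j (ipd_update x e) \<le> G"
        using N_D_update_le_Suc[of e d n j x] N by linarith
    qed
    also have "\<dots> = emeasure ?S {\<omega>. reaches_before_two d j G (Suc k) x \<omega>}"
      using False by (subst emeasure_reaches_before_two_Suc[OF n]) simp_all
    finally show ?thesis .
  qed
qed

section \<open>Hitting times and holding times\<close>

lemma conf_Suc_shift: "conf x \<omega> (Suc i) = conf (ipd_update x (fst (shd \<omega>))) (stl \<omega>) i"
  by (induction i) auto

lemma reaches_before_two_conf:
  assumes "G \<noteq> 2" "reaches_before_two d j G k x \<omega>"
  shows "\<exists>i\<le>k. N_D d j (conf x \<omega> i) = G \<and> (\<forall>l\<le>i. N_D d j (conf x \<omega> l) \<noteq> 2)"
  using assms(2)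
proof (induction k arbitrary: x \<omega>)
  case 0
  then show ?case
    using assms(1) by auto
next
  case (Suc k)
  show ?case
  proof (cases "N_D d j x = G")
    case True
    then show ?thesis
      using assms(1) by (intro exI[of _ 0]) auto
  next
    case False
    let ?x' = "ipd_update x (fst (shd \<omega>))"
    have N2: "N_D d j x \<noteq> 2" and "reaches_before_two d j G k ?x' (stl \<omega>)"
      using Suc.prems False by auto
    then obtain i where i: "i \<le> k" "N_D d j (conf ?x' (stl \<omega>) i) = G"
      "\<forall>l\<le>i. N_D d j (conf ?x' (stl \<omega>) l) \<noteq> 2"
      using Suc.IH by blast
    have "\<forall>l\<le>Suc i. N_D d j (conf x \<omega> l) \<noteq> 2"
    proof (intro allI impI)
      fix l assume "l \<le> Suc i"
      then show "N_D d j (conf x \<omega> l) \<noteq> 2"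
        using N2 i(3) by (cases l) (auto simp: conf_Suc_shift simp del: conf.simps(2))
    qed
    then show ?thesis
      using i by (intro exI[of _ "Suc i"]) (auto simp: conf_Suc_shift simp del: conf.simps(2))
  qed
qed

lemma jump_time_mono:
  assumes "\<forall>i. 0 < snd (\<omega> !! i)" "l \<le> l'"
  shows "jump_time \<omega> l \<le> jump_time \<omega> l'"
  unfolding jump_time_def using assms by (intro sum_mono2) (auto simp: less_imp_le)

lemma hit_time_less_min:
  assumes pos: "\<forall>i. 0 < snd (\<omega> !! i)" and "i \<le> K" and "N_D d j (conf x \<omega> i) = G"
    and before_two: "\<forall>l\<le>i. N_D d j (conf x \<omega> l) \<noteq> 2" and "jump_time \<omega> K < M"
  shows "hit_time d j x G \<omega> < min (hit_time d j x 2 \<omega>) (ereal M)"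
proof -
  have hit_G: "hit_time d j x G \<omega> \<le> ereal (jump_time \<omega> i)"
    unfolding hit_time_def using assms(3) by (intro INF_lower) auto
  have hit_2: "ereal (jump_time \<omega> (Suc i)) \<le> hit_time d j x 2 \<omega>"
    unfolding hit_time_def
  proof (rule INF_greatest)
    fix l assume "l \<in> {k. N_D d j (conf x \<omega> k) = 2}"
    then have "Suc i \<le> l"
      using before_two by (metis mem_Collect_eq not_less_eq_eq)
    then show "ereal (jump_time \<omega> (Suc i)) \<le> ereal (jump_time \<omega> l)"
      using jump_time_mono[OF pos] by simp
  qed
  have "ereal (jump_time \<omega> i) < ereal (jump_time \<omega> (Suc i))"
    using pos by (simp add: jump_time_def)
  then have "ereal (jump_time \<omega> i) < hit_time d j x 2 \<omega>"
    using hit_2 by (rule less_le_trans)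
  moreover have "jump_time \<omega> i < M"
    using jump_time_mono[OF pos assms(2)] assms(5) by linarith
  ultimately show ?thesis
    using hit_G by (simp add: le_less_trans)
qed

lemma AE_holding_times_pos:
  assumes "0 < n"
  shows "AE \<omega> in stream_space (step_measure d n). \<forall>i. 0 < snd (\<omega> !! i)"
proof -
  interpret prob_space "step_measure d n"
    using assms by (rule prob_space_step_measure)
  let ?M1 = "measure_pmf (pmf_of_set (chain_edges d n))"
  let ?M2 = "density lborel (exponential_density (real (card (chain_edges d n))))"
  interpret H: prob_space ?M2
    using assms by (rule prob_space_holding_time)
  interpret pair_sigma_finite ?M1 ?M2
    by unfold_locales
  have "AE y in ?M2. 0 < y"
  proof (subst AE_density)
    show "AE y in lborel. 0 < ennreal (exponential_density (real (card (chain_edges d n))) y) \<longrightarrow> 0 < y"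
      using AE_lborel_singleton[of "0::real"]
      by eventually_elim (auto simp: exponential_density_def)
  qed simp
  then have "AE t in step_measure d n. 0 < snd t"
    unfolding step_measure_def by (intro AE_pair_measure) auto
  then have "AE \<omega> in stream_space (step_measure d n). stream_all (\<lambda>t. 0 < snd t) \<omega>"
    by (intro AE_stream_all) auto
  then show ?thesis
    unfolding stream_all_def by blast
qed

lemma nn_integral_holding_time:
  assumes "0 < n"
  shows "(\<integral>\<^sup>+t. ennreal (max 0 (snd t)) \<partial>step_measure d n) = ennreal (1 / real (card (chain_edges d n)))"
proof -
  let ?c = "real (card (chain_edges d n))"
  let ?M1 = "measure_pmf (pmf_of_set (chain_edges d n))"
  let ?M2 = "density lborel (exponential_density ?c)"
  have c: "0 < ?c"
    using card_chain_edges_pos[OF assms] by simp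
  interpret H: prob_space ?M2
    using assms by (rule prob_space_holding_time)
  have "(\<integral>\<^sup>+y. ennreal y \<partial>?M2) = (\<integral>\<^sup>+y. ennreal (exponential_density ?c y) * ennreal y \<partial>lborel)"
    by (rule nn_integral_density) auto
  also have "\<dots> = (\<integral>\<^sup>+y. ennreal (erlang_density 0 ?c y * y ^ 1) \<partial>lborel)"
    using c by (intro nn_integral_cong)
      (auto simp: exponential_density_def ennreal_mult[symmetric] ennreal_neg)
  also have "\<dots> = ennreal (1 / ?c)"
    using c by (subst nn_integral_erlang_ith_moment) (auto simp: divide_ennreal[symmetric])
  finally have mean: "(\<integral>\<^sup>+y. ennreal y \<partial>?M2) = ennreal (1 / ?c)" .
  have "(\<integral>\<^sup>+t. ennreal (max 0 (snd t)) \<partial>step_measure d n) =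
      (\<integral>\<^sup>+x. (\<integral>\<^sup>+y. ennreal (max 0 y) \<partial>?M2) \<partial>?M1)"
    unfolding step_measure_def by (subst H.nn_integral_fst[symmetric]) simp_all
  then show ?thesis
    by (simp add: mean measure_pmf.emeasure_space_1)
qed

lemma sets_jump_time_ge: "{\<omega>. M \<le> jump_time \<omega> K} \<in> sets (stream_space (step_measure d n))"
proof -
  have "Measurable.pred (stream_space (step_measure d n)) (\<lambda>\<omega>. M \<le> jump_time \<omega> K)"
    unfolding jump_time_def by measurable
  then show ?thesis
    using predE by fastforce
qed

lemma emeasure_jump_time_ge:
  assumes "0 < n" "0 < M"
  shows "emeasure (stream_space (step_measure d n)) {\<omega>. M \<le> jump_time \<omega> K}
     \<le> ennreal (real K / (real (card (chain_edges d n)) * M))"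
proof -
  let ?S = "stream_space (step_measure d n)" and ?c = "real (card (chain_edges d n))"
  have c: "0 < ?c"
    using card_chain_edges_pos[OF assms(1)] by simp
  define u :: "((vtx \<times> vtx) \<times> real) stream \<Rightarrow> ennreal"
    where "u \<omega> = ennreal (\<Sum>i<K. max 0 (snd (\<omega> !! i)))" for \<omega>
  have [measurable]: "u \<in> borel_measurable ?S"
    unfolding u_def by measurable
  have "{\<omega>. M \<le> jump_time \<omega> K} \<subseteq> {\<omega> \<in> space ?S. 1 \<le> ennreal (1 / M) * u \<omega>}"
  proof safe
    fix \<omega> assume "M \<le> jump_time \<omega> K"
    moreover have "jump_time \<omega> K \<le> (\<Sum>i<K. max 0 (snd (\<omega> !! i)))"
      unfolding jump_time_def by (rule sum_mono) simp
    ultimately have "1 \<le> (\<Sum>i<K. max 0 (snd (\<omega> !! i))) / M"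
      using assms(2) by simp
    moreover have "ennreal (1 / M) * u \<omega> = ennreal ((\<Sum>i<K. max 0 (snd (\<omega> !! i))) / M)"
      unfolding u_def using assms(2) by (simp add: ennreal_mult[symmetric] sum_nonneg)
    ultimately show "1 \<le> ennreal (1 / M) * u \<omega>"
      by (simp add: ennreal_leI)
  qed simp
  then have "emeasure ?S {\<omega>. M \<le> jump_time \<omega> K} \<le> emeasure ?S {\<omega> \<in> space ?S. 1 \<le> ennreal (1 / M) * u \<omega>}"
    by (intro emeasure_mono) measurable
  also have "\<dots> \<le> ennreal (1 / M) * (\<integral>\<^sup>+\<omega>. u \<omega> * indicator (space ?S) \<omega> \<partial>?S)"
    by (rule nn_integral_Markov_inequality) measurable
  also have "(\<integral>\<^sup>+\<omega>. u \<omega> * indicator (space ?S) \<omega> \<partial>?S) = (\<Sum>i<K. \<integral>\<^sup>+\<omega>. ennreal (max 0 (snd (\<omega> !! i))) \<partial>?S)"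
    unfolding u_def
    by (simp add: nn_integral_sum sum_ennreal[symmetric] del: ennreal_max_0 sum_ennreal)
  also have "\<dots> = of_nat K * ennreal (1 / ?c)"
    using prob_space.nn_integral_snth_stream_space[OF prob_space_step_measure[OF assms(1)],
        of "\<lambda>t. ennreal (max 0 (snd t))"] nn_integral_holding_time[OF assms(1)]
    by simp
  also have "ennreal (1 / M) * \<dots> = ennreal (real K / (?c * M))"
    using assms(2) c by (simp add: ennreal_mult[symmetric] ennreal_of_nat_eq_real_of_nat)
  finally show ?thesis .
qed

lemma AE_hit_time_ge_min_imp:
  assumes "0 < n" "G \<noteq> 2"
  shows "AE \<omega> in stream_space (step_measure d n).
    hit_time d j x G \<omega> \<ge> min (hit_time d j x 2 \<omega>) (ereal M) \<longrightarrow>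
    \<not> reaches_before_two d j G K x \<omega> \<or> M \<le> jump_time \<omega> K"
  using AE_holding_times_pos[OF assms(1)]
proof eventually_elim
  case (elim \<omega>)
  show ?case
  proof (intro impI disjCI notI)
    assume ge: "hit_time d j x G \<omega> \<ge> min (hit_time d j x 2 \<omega>) (ereal M)"
      and early: "\<not> M \<le> jump_time \<omega> K" and reach: "reaches_before_two d j G K x \<omega>"
    obtain i where i: "i \<le> K" "N_D d j (conf x \<omega> i) = G" "\<forall>l\<le>i. N_D d j (conf x \<omega> l) \<noteq> 2"
      using reaches_before_two_conf[OF assms(2) reach] by blast
    have "hit_time d j x G \<omega> < min (hit_time d j x 2 \<omega>) (ereal M)"
      using early by (intro hit_time_less_min[OF elim i]) simp
    then show False
      using ge by (meson leD)
  qed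
qed

lemma prob_reaches_before_two_ge:
  assumes "j < n" "N_D d j x = 3" "4 \<le> G" "3 * G + 3 \<le> d"
  shows "5/12 \<le> measure (stream_space (step_measure d n))
    {\<omega>. reaches_before_two d j G (4 * card (chain_edges d n) * d) x \<omega>}"
proof -
  let ?S = "stream_space (step_measure d n)"
  let ?c = "real (card (chain_edges d n))" and ?K = "4 * card (chain_edges d n) * d"
  interpret S: prob_space ?S
    using assms(1) by (intro prob_space.prob_space_stream_space prob_space_step_measure) simp
  have c: "1 \<le> ?c"
    using card_chain_edges_pos[of n d] assms(1) by simp
  have "real (3 * G + 3) \<le> real d"
    using assms(4) by (simp only: of_nat_le_iff)
  then have "12 * real G \<le> 4 * real d"
    by simp
  have "?c * gap_pot d j G x * 12 \<le> ?c * (12 * real G)"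
    using c assms(2) by (simp add: gap_pot_def root_bonus_def)
  also have "\<dots> \<le> ?c * (4 * real d)"
    using c \<open>12 * real G \<le> 4 * real d\<close> by (intro mult_left_mono) simp_all
  also have "\<dots> \<le> real (Suc ?K)"
    by simp
  finally have "?c * gap_pot d j G x * 12 \<le> real (Suc ?K)" .
  then have "?c * gap_pot d j G x / real (Suc ?K) \<le> 1/12"
    by (simp add: field_simps del: of_nat_Suc)
  then have "5/12 \<le> success_bound d n j G ?K x"
    unfolding success_bound_def assms(2) subharm_3 by (intro max.coboundedI2) simp
  then have "ennreal (5/12) \<le> ennreal (success_bound d n j G ?K x)"
    by (rule ennreal_leI)
  also have "\<dots> \<le> emeasure ?S {\<omega>. reaches_before_two d j G ?K x \<omega>}"
    using assms by (intro success_bound_le_emeasure) simp_all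
  finally show ?thesis
    by (simp add: S.emeasure_eq_measure)
qed

lemma prob_jump_time_ge_le:
  assumes "0 < n" "0 < d" "48 * real d \<le> M"
  shows "measure (stream_space (step_measure d n))
    {\<omega>. M \<le> jump_time \<omega> (4 * card (chain_edges d n) * d)} \<le> 1/12"
proof -
  let ?S = "stream_space (step_measure d n)" and ?c = "real (card (chain_edges d n))"
  interpret S: prob_space ?S
    using assms(1) by (intro prob_space.prob_space_stream_space prob_space_step_measure)
  have c: "0 < ?c"
    using card_chain_edges_pos[OF assms(1)] by simp
  have M: "0 < M"
    using assms(2,3) by simp
  have "emeasure ?S {\<omega>. M \<le> jump_time \<omega> (4 * card (chain_edges d n) * d)}
      \<le> ennreal (real (4 * card (chain_edges d n) * d) / (?c * M))"
    by (rule emeasure_jump_time_ge[OF assms(1) M])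
  also have "real (4 * card (chain_edges d n) * d) / (?c * M) = 4 * real d / M"
    using c by simp
  also have "\<dots> \<le> 1/12"
    using assms(3) M by (simp add: divide_le_eq)
  finally have "ennreal (measure ?S {\<omega>. M \<le> jump_time \<omega> (4 * card (chain_edges d n) * d)}) \<le> ennreal (1/12)"
    by (simp only: S.emeasure_eq_measure ennreal_leI)
  then show ?thesis
    by (rule ennreal_le_iff[THEN iffD1, rotated]) simp
qed

lemma target_count_bounds:
  assumes "15 < d"
  shows "4 \<le> nat \<lceil>real d / 3 - 2\<rceil>" "3 * nat \<lceil>real d / 3 - 2\<rceil> + 3 \<le> d"
proof -
  have "real d / 3 - 2 \<le> of_int \<lceil>real d / 3 - 2\<rceil>" "of_int \<lceil>real d / 3 - 2\<rceil> < real d / 3 - 1"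
    using ceiling_correct[of "real d / 3 - 2"] by linarith+
  moreover have "real (nat \<lceil>real d / 3 - 2\<rceil>) = of_int \<lceil>real d / 3 - 2\<rceil>"
    using assms by simp
  ultimately show "4 \<le> nat \<lceil>real d / 3 - 2\<rceil>" "3 * nat \<lceil>real d / 3 - 2\<rceil> + 3 \<le> d"
    using assms by linarith+
qed

lemma prob_hit_time_ge_min_le:
  assumes "j < n" "15 < d" "48 * real d \<le> M" "N_D d j x = 3"
  shows "measure (ipd_space d n)
    {\<omega> \<in> space (ipd_space d n). hit_time d j x (nat \<lceil>real d / 3 - 2\<rceil>) \<omega>
       \<ge> min (hit_time d j x 2 \<omega>) (ereal M)} \<le> 2/3"
proof -
  define G where "G = nat \<lceil>real d / 3 - 2\<rceil>"
  let ?S = "stream_space (step_measure d n)" and ?K = "4 * card (chain_edges d n) * d"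
  define Reach where "Reach = {\<omega>. reaches_before_two d j G ?K x \<omega>}"
  define Late where "Late = {\<omega>. M \<le> jump_time \<omega> ?K}"
  have n: "0 < n"
    using assms(1) by simp
  interpret S: prob_space ?S
    using n by (intro prob_space.prob_space_stream_space prob_space_step_measure)
  have G: "4 \<le> G" "3 * G + 3 \<le> d"
    unfolding G_def using target_count_bounds[OF assms(2)] by simp_all
  have Reach_sets: "Reach \<in> sets ?S"
    unfolding Reach_def by (rule sets_reaches_before_two)
  have Late_sets: "Late \<in> sets ?S"
    unfolding Late_def by (rule sets_jump_time_ge)
  have "G \<noteq> 2"
    using G(1) by simp
  then have "AE \<omega> in ?S. hit_time d j x G \<omega> \<ge> min (hit_time d j x 2 \<omega>) (ereal M) \<longrightarrow>
      \<omega> \<in> (UNIV - Reach) \<union> Late"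
    using AE_hit_time_ge_min_imp[OF n, of G d j x M ?K] by (simp add: Reach_def Late_def)
  moreover have compl_sets: "UNIV - Reach \<in> sets ?S"
    using sets.compl_sets[OF Reach_sets] by simp
  ultimately have "measure ?S {\<omega>. hit_time d j x G \<omega> \<ge> min (hit_time d j x 2 \<omega>) (ereal M)}
      \<le> measure ?S ((UNIV - Reach) \<union> Late)"
    using Late_sets by (intro S.finite_measure_mono_AE sets.Un) simp_all
  also have "\<dots> \<le> measure ?S (UNIV - Reach) + measure ?S Late"
    using compl_sets Late_sets by (intro measure_subadditive) (simp_all add: S.emeasure_eq_measure)
  also have "measure ?S (UNIV - Reach) = 1 - measure ?S Reach"
    using S.prob_compl[OF Reach_sets] by simp
  finally show ?thesis
    using prob_reaches_before_two_ge[OF assms(1,4) G] prob_jump_time_ge_le[OF n _ assms(3)] assms(2)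
    by (simp add: ipd_space_eq_stream_space G_def Reach_def Late_def)
qed

lemma N_D_initial:
  assumes "15 < d"
    and C: "\<forall>k. 3 \<le> k \<and> k \<le> d - 3 \<longrightarrow> x (Leaf j k) = Cp"
    and D: "\<forall>k. d - 3 < k \<and> k \<le> d \<longrightarrow> x (Leaf j k) = Df"
  shows "N_D d j x = 3"
proof -
  have "k \<in> {k. 3 \<le> k \<and> k \<le> d \<and> x (Leaf j k) = Df} \<longleftrightarrow> k \<in> {d - 2..d}" for k
  proof (cases "k \<le> d - 3")
    case True
    then show ?thesis
      using C assms(1) by (cases "3 \<le> k") auto
  next
    case False
    then show ?thesis
      using D assms(1) by auto
  qed
  then have "{k. 3 \<le> k \<and> k \<le> d \<and> x (Leaf j k) = Df} = {d - 2..d}"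
    by blast
  then show ?thesis
    using assms(1) by (simp add: N_D_def)
qed

theorem mainTheorem4:
  fixes M' :: "nat \<Rightarrow> real"
  assumes "filterlim (\<lambda>d. M' d / (real d)^2) at_top sequentially"
  shows "\<exists>d0. \<forall>d\<ge>d0. \<forall>n j (x0 :: vtx \<Rightarrow> act).
           15 < d \<longrightarrow> j < n \<longrightarrow>
           (\<forall>k. 3 \<le> k \<and> k \<le> d - 3 \<longrightarrow> x0 (Leaf j k) = Cp) \<longrightarrow>
           (\<forall>k. d - 3 < k \<and> k \<le> d \<longrightarrow> x0 (Leaf j k) = Df) \<longrightarrow>
           measure (ipd_space d n)
             {\<omega> \<in> space (ipd_space d n).
                hit_time d j x0 (nat \<lceil>real d / 3 - 2\<rceil>) \<omega>
                  \<ge> min (hit_time d j x0 2 \<omega>) (ereal (M' d))}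
           \<le> 2 / 3"
proof -
  obtain d1 where d1: "\<And>d. d \<ge> d1 \<Longrightarrow> 48 \<le> M' d / (real d)^2"
    using assms unfolding filterlim_at_top eventually_sequentially by blast
  have M': "48 * real d \<le> M' d" if "d1 \<le> d" "0 < d" for d
  proof -
    have "48 * real d \<le> 48 * (real d)^2"
      using that(2) by (simp add: power2_eq_square)
    also have "\<dots> \<le> M' d"
      using d1[OF that(1)] that(2) by (simp add: field_simps)
    finally show ?thesis .
  qed
  show ?thesis
    by (intro exI[of _ d1] allI impI prob_hit_time_ge_min_le M' N_D_initial) simp_all
qed

end
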